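(* Let $\mu>0$, $u_a\in\mathbb{R}$, $\alpha_\pm>0$, $u_->u_+$, with Riemann data $(\alpha_0,u_0)=(\alpha_-,u_-)$ for $x<0$, $(\alpha_+,u_+)$ for $x>0$. Let $u_l(t)=u_a+(u_--u_a)e^{-\mu t}$, $u_r(t)=u_a+(u_+-u_a)e^{-\mu t}$, $\alpha_l\equiv\alpha_-$, $\alpha_r\equiv\alpha_+$. Let $(\omega,\sigma)\in\mathcal{C}^1([0,\infty))^2$ be a solution of the generalized Rankine–Hugoniot conditions $$\frac{d\omega}{dt}=(\alpha_r-\alpha_l)\sigma-(\alpha_ru_r-\alpha_lu_l),\quad \frac{d(\omega\sigma)}{dt}=(\alpha_ru_r-\alpha_lu_l)\sigma-(\alpha_ru_r^2-\alpha_lu_l^2)+\mu(u_a-\sigma)\omega,$$ with $\omega(0)=0$, satisfying $u_r(t)<\sigma(t)<u_l(t)$ for all $t\ge0$, and let $\xi(t)=\int_0^t\sigma(s)ds$. Then $\alpha=\alpha^0+\omega(t)\delta(x-\xi(t))$, $u=u^0$, with $(\alpha^0,u^0)=(\alpha_-,u_l(t))$ for $x<\xi(t)$ and $(\alpha_+,u_r(t))$ for $x>\xi(t)$, is a $\delta$-shock solution (weak solution satisfying Lax's entropy condition) of the Eulerian droplet model with these Riemann data.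
   Context: The Eulerian droplet model: $\partial_t\alpha+\partial_x(\alpha u)=0$, $\partial_t(\alpha u)+\partial_x(\alpha u^2)=\mu\alpha(u_a-u)$. For $\psi\in\mathcal{C}_0^\infty(\mathbb{R}\times[0,\infty))$: $\langle\alpha,\psi\rangle=\int_0^\infty\int\alpha^0\psi+\int_0^\infty\omega\psi(\xi(t),t)dt$, $\langle\alpha u,\psi\rangle=\int_0^\infty\int\alpha^0u^0\psi+\int_0^\infty\omega\xi'\psi(\xi(t),t)dt$, $\langle\alpha u^2,\psi\rangle=\int_0^\infty\int\alpha^0(u^0)^2\psi+\int_0^\infty\sigma\omega\xi'\psi(\xi(t),t)dt$, $\langle\alpha(u_a-u),\psi\rangle=\int_0^\infty\int\alpha^0(u_a-u^0)\psi+\int_0^\infty(u_a-\sigma)\omega\psi(\xi(t),t)dt$. Weak solution with $\omega_0=0$: for all such $\psi$, $\langle\alpha,\psi_t\rangle+\langle\alpha u,\psi_x\rangle=-\int\alpha_0\psi(x,0)dx$ and $\langle\alpha u,\psi_t\rangle+\langle\alpha u^2,\psi_x\rangle+\mu\langle\alpha(u_a-u),\psi\rangle=-\int\alpha_0u_0\psi(x,0)dx$. *)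

theory Defs
  imports "HOL-Analysis.Analysis"
begin

fun Ck :: "nat \<Rightarrow> (real \<times> real \<Rightarrow> real) \<Rightarrow> bool" where
  "Ck 0 f = continuous_on UNIV f"
| "Ck (Suc k) f = (\<exists>fx ft. (\<forall>p. (f has_derivative (\<lambda>h. fx p * fst h + ft p * snd h)) (at p))
                          \<and> Ck k fx \<and> Ck k ft)"

definition smooth2 :: "(real \<times> real \<Rightarrow> real) \<Rightarrow> bool" where
  "smooth2 f \<longleftrightarrow> (\<forall>k. Ck k f)"

text \<open>Test functions in C_0^infinity(R x [0,infinity)): smooth, and the support in the closed
  half plane t >= 0 is bounded (hence compact).\<close>
definition test_fun :: "(real \<times> real \<Rightarrow> real) \<Rightarrow> bool" where
  "test_fun \<psi> \<longleftrightarrow> smooth2 \<psi> \<and>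
     (\<exists>R. \<forall>x t. t \<ge> 0 \<longrightarrow> (\<bar>x\<bar> > R \<or> t > R) \<longrightarrow> \<psi> (x, t) = 0)"

definition px :: "(real \<times> real \<Rightarrow> real) \<Rightarrow> real \<Rightarrow> real \<Rightarrow> real" where
  "px \<psi> x t = deriv (\<lambda>y. \<psi> (y, t)) x"

definition pt :: "(real \<times> real \<Rightarrow> real) \<Rightarrow> real \<Rightarrow> real \<Rightarrow> real" where
  "pt \<psi> x t = deriv (\<lambda>s. \<psi> (x, s)) t"

definition dint :: "(real \<Rightarrow> real \<Rightarrow> real) \<Rightarrow> real" where
  "dint g = (LBINT t:{0..}. (LBINT x. g x t))"

definition tint :: "(real \<Rightarrow> real) \<Rightarrow> real" where
  "tint h = (LBINT t:{0..}. h t)"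

definition C1_halfline :: "(real \<Rightarrow> real) \<Rightarrow> bool" where
  "C1_halfline f \<longleftrightarrow> (\<exists>f'. (\<forall>t\<ge>0. (f has_real_derivative f' t) (at t within {0..}))
                             \<and> continuous_on {0..} f')"

end

theory Submission
  imports Defs
begin

text \<open>
  On each side of the curve \<open>x = \<xi>(t)\<close> the state is constant in \<open>x\<close>, so after the shift
  \<open>x = y + \<xi>(t)\<close>, Fubini and the fundamental theorem of calculus in \<open>t\<close>, the regular part of
  the weak form against a test function reduces to the initial-data term plus integrals along the
  curve.  The \<open>\<delta>\<close>-part, differentiated along the curve, contributes further curve integrals,
  and all of them cancel precisely when the weight \<open>w\<close> of the \<open>\<delta>\<close> satisfies
  \<open>w' = [\<rho>] \<sigma> - [q] + m\<close> (jump of density times speed, minus jump of flux, plus singular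
  source).  For the droplet model these are the generalized Rankine--Hugoniot conditions, with
  \<open>u\<^sub>l, u\<^sub>r\<close> relaxing to \<open>u\<^sub>a\<close> so that the regular source is absorbed by their time derivative.
\<close>

section \<open>Integrals against step functions\<close>

lemma lborel_integral_step_mult:
  fixes q :: "real \<Rightarrow> real"
  assumes q: "continuous_on UNIV q" and K: "0 < K"
    and q_vanishes: "\<And>x. K < \<bar>x - s\<bar> \<Longrightarrow> q x = 0"
  shows "(LBINT x. (if x < s then A else B) * q x)
     = A * integral {-K..0} (\<lambda>y. q (y + s)) + B * integral {0..K} (\<lambda>y. q (y + s))"
proof -
  define f where "f y = (if y < 0 then A else B) * q (y + s)" for y
  have shift: "(LBINT x. (if x < s then A else B) * q x) = (LBINT y. f y)"
    using lborel_integral_real_affine[where c=1 and t=s, of "\<lambda>x. (if x < s then A else B) * q x"]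
    by (simp add: f_def add.commute)
  have q_shift: "continuous_on UNIV (\<lambda>y. q (y + s))"
    by (intro continuous_on_compose2[OF q] continuous_intros) auto
  have f_vanishes: "f y = 0" if "y \<notin> {-K..K}" for y
    using that q_vanishes[of "y + s"] by (auto simp: f_def)
  have "bounded ((\<lambda>y. q (y + s)) ` {-K..K})"
    by (intro compact_imp_bounded compact_continuous_image continuous_on_subset[OF q_shift]) auto
  then obtain C where C: "\<And>y. y \<in> {-K..K} \<Longrightarrow> \<bar>q (y + s)\<bar> \<le> C"
    unfolding bounded_real by blast
  have "integrable lborel f"
  proof (rule integrableI_bounded_set[where A="{-K..K}" and B="(\<bar>A\<bar> + \<bar>B\<bar>) * C"])
    show "f \<in> borel_measurable lborel"
      unfolding f_def using borel_measurable_continuous_onI[OF q_shift] by measurable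
    show "AE x in lborel. x \<in> {-K..K} \<longrightarrow> norm (f x) \<le> (\<bar>A\<bar> + \<bar>B\<bar>) * C"
      using C by (intro AE_I2) (force simp: f_def abs_mult intro: mult_mono)
  qed (use K f_vanishes in auto)
  then have "(f has_integral (LBINT y. f y)) UNIV"
    by (rule has_integral_integral_lborel)
  moreover have "(f has_integral A * integral {-K..0} (\<lambda>y. q (y + s))
                               + B * integral {0..K} (\<lambda>y. q (y + s))) UNIV"
  proof (rule has_integral_on_superset[OF has_integral_combine])
    have "((\<lambda>y. A * q (y + s)) has_integral A * integral {-K..0} (\<lambda>y. q (y + s))) {-K..0}"
      by (intro has_integral_mult_right integrable_integral integrable_continuous_interval
          continuous_on_subset[OF q_shift]) auto
    then show "(f has_integral A * integral {-K..0} (\<lambda>y. q (y + s))) {-K..0}"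
      by (rule has_integral_spike_finite[where S="{0}", rotated 2]) (auto simp: f_def)
    have "((\<lambda>y. B * q (y + s)) has_integral B * integral {0..K} (\<lambda>y. q (y + s))) {0..K}"
      by (intro has_integral_mult_right integrable_integral integrable_continuous_interval
          continuous_on_subset[OF q_shift]) auto
    then show "(f has_integral B * integral {0..K} (\<lambda>y. q (y + s))) {0..K}"
      by (rule has_integral_eq[rotated]) (auto simp: f_def)
  qed (use K f_vanishes in auto)
  ultimately show ?thesis
    using shift has_integral_unique by metis
qed

lemma has_integral_LBINT_atLeast:
  fixes g h :: "real \<Rightarrow> real"
  assumes "0 \<le> T" and h: "continuous_on {0..T} h"
    and "\<And>t. t \<in> {0..T} \<Longrightarrow> g t = h t" and "\<And>t. T < t \<Longrightarrow> g t = 0"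
  shows "(h has_integral (LBINT t:{0..}. g t)) {0..T}"
proof -
  have "(LBINT t:{0..}. g t) = (LBINT t:{0..T}. h t)"
    unfolding set_lebesgue_integral_def
    by (rule Bochner_Integration.integral_cong) (auto simp: indicator_def assms(3,4) not_le)
  also have "\<dots> = integral {0..T} h"
    by (rule set_borel_integral_eq_integral(2)[OF borel_integrable_atLeastAtMost'[OF h]])
  finally show ?thesis
    using integrable_continuous_interval[OF h] by (simp add: integrable_integral)
qed

lemma dint_cmult: "dint (\<lambda>x t. c * g x t) = c * dint g"
  by (simp add: dint_def)

lemma tint_cmult: "tint (\<lambda>t. c * h t) = c * tint h"
  by (simp add: tint_def)

lemma continuous_on_integral_shifted:
  fixes q :: "real \<times> real \<Rightarrow> real"
  assumes "continuous_on UNIV q" "continuous_on S \<xi>"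
  shows "continuous_on S (\<lambda>t. integral {a..b} (\<lambda>y. q (y + \<xi> t, t)))"
proof -
  have "continuous_on (S \<times> cbox a b) (\<lambda>(t, y). q (y + \<xi> t, t))"
    unfolding split_beta
    by (intro continuous_on_compose2[OF assms(1)] continuous_intros continuous_on_compose2[OF assms(2)])
      auto
  from integral_continuous_on_param[OF this] show ?thesis
    by (simp add: cbox_interval)
qed

section \<open>Test functions\<close>

locale C1_plane_fun =
  fixes \<psi> \<psi>x \<psi>t :: "real \<times> real \<Rightarrow> real"
  assumes has_derivative: "\<And>p. (\<psi> has_derivative (\<lambda>h. \<psi>x p * fst h + \<psi>t p * snd h)) (at p)"
    and continuous_\<psi>x: "continuous_on UNIV \<psi>x"
    and continuous_\<psi>t: "continuous_on UNIV \<psi>t"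
begin

lemma continuous_\<psi>: "continuous_on UNIV \<psi>"
  using has_derivative has_derivative_continuous continuous_at_imp_continuous_on by blast

lemma continuous_on_\<psi>_compose [continuous_intros]:
  "continuous_on S h \<Longrightarrow> continuous_on S (\<lambda>s. \<psi> (h s))"
  "continuous_on S h \<Longrightarrow> continuous_on S (\<lambda>s. \<psi>x (h s))"
  "continuous_on S h \<Longrightarrow> continuous_on S (\<lambda>s. \<psi>t (h s))"
  by (auto intro: continuous_on_compose2[OF continuous_\<psi>] continuous_on_compose2[OF continuous_\<psi>x]
      continuous_on_compose2[OF continuous_\<psi>t])

lemma has_real_derivative_\<psi>_compose:
  assumes "(X has_real_derivative X') (at s within S)" "(Y has_real_derivative Y') (at s within S)"
  shows "((\<lambda>s. \<psi> (X s, Y s)) has_real_derivative \<psi>x (X s, Y s) * X' + \<psi>t (X s, Y s) * Y')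
           (at s within S)"
proof -
  have "((\<lambda>s. (X s, Y s)) has_derivative (\<lambda>h. (X' * h, Y' * h))) (at s within S)"
    using assms by (intro has_derivative_Pair) (simp_all add: has_field_derivative_def)
  from has_derivative_compose[OF this has_derivative]
  show ?thesis
    unfolding has_field_derivative_def
    by (rule has_derivative_eq_rhs) (auto simp: algebra_simps fun_eq_iff)
qed

lemma has_real_derivative_\<psi>_x: "((\<lambda>y. \<psi> (y, t)) has_real_derivative \<psi>x (x, t)) (at x)"
proof -
  have "((\<lambda>y. \<psi> (y, t)) has_real_derivative \<psi>x (x, t) * 1 + \<psi>t (x, t) * 0) (at x)"
    by (intro has_real_derivative_\<psi>_compose DERIV_ident DERIV_const)
  then show ?thesis by simp
qed

lemma has_real_derivative_\<psi>_t: "((\<lambda>s. \<psi> (x, s)) has_real_derivative \<psi>t (x, t)) (at t)"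
proof -
  have "((\<lambda>s. \<psi> (x, s)) has_real_derivative \<psi>x (x, t) * 0 + \<psi>t (x, t) * 1) (at t)"
    by (intro has_real_derivative_\<psi>_compose DERIV_ident DERIV_const)
  then show ?thesis by simp
qed

lemma px_eq: "px \<psi> x t = \<psi>x (x, t)"
  unfolding px_def by (rule DERIV_imp_deriv[OF has_real_derivative_\<psi>_x])

lemma pt_eq: "pt \<psi> x t = \<psi>t (x, t)"
  unfolding pt_def by (rule DERIV_imp_deriv[OF has_real_derivative_\<psi>_t])

lemma integral_\<psi>x:
  assumes "a \<le> b"
  shows "integral {a..b} (\<lambda>y. \<psi>x (y + s, t)) = \<psi> (b + s, t) - \<psi> (a + s, t)"
proof (rule integral_unique, rule fundamental_theorem_of_calculus[OF assms])
  fix y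
  have "((\<lambda>y. \<psi> (y + s, t)) has_real_derivative \<psi>x (y + s, t)) (at y within {a..b})"
    using has_real_derivative_\<psi>_compose[OF DERIV_add[OF DERIV_ident DERIV_const] DERIV_const] by simp
  then show "((\<lambda>y. \<psi> (y + s, t)) has_vector_derivative \<psi>x (y + s, t)) (at y within {a..b})"
    by (simp add: has_real_derivative_iff_has_vector_derivative)
qed

lemma has_integral_along_curve:
  assumes T: "0 \<le> T"
    and \<eta>: "\<And>t. t \<in> {0..T} \<Longrightarrow> (\<eta> has_real_derivative \<sigma> t) (at t within {0..T})"
    and w: "\<And>t. t \<in> {0..T} \<Longrightarrow> (w has_real_derivative w' t) (at t within {0..T})"
  shows "((\<lambda>t. w' t * \<psi> (\<eta> t, t) + w t * (\<sigma> t * \<psi>x (\<eta> t, t) + \<psi>t (\<eta> t, t)))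
           has_integral w T * \<psi> (\<eta> T, T) - w 0 * \<psi> (\<eta> 0, 0)) {0..T}"
proof (rule fundamental_theorem_of_calculus[OF T])
  fix t assume t: "t \<in> {0..T}"
  have "((\<lambda>t. \<psi> (\<eta> t, t)) has_real_derivative \<psi>x (\<eta> t, t) * \<sigma> t + \<psi>t (\<eta> t, t) * 1)
          (at t within {0..T})"
    by (rule has_real_derivative_\<psi>_compose[OF \<eta>[OF t] DERIV_ident])
  from DERIV_mult[OF w[OF t] this]
  show "((\<lambda>t. w t * \<psi> (\<eta> t, t)) has_vector_derivative
          w' t * \<psi> (\<eta> t, t) + w t * (\<sigma> t * \<psi>x (\<eta> t, t) + \<psi>t (\<eta> t, t))) (at t within {0..T})"
    by (simp add: has_real_derivative_iff_has_vector_derivative algebra_simps)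
qed

lemma integral_along_shift:
  assumes "a \<le> b"
  shows "integral {a..b} (\<lambda>y. c' * \<psi> (y + s, t) + c * (v * \<psi>x (y + s, t) + \<psi>t (y + s, t)))
    = c' * integral {a..b} (\<lambda>y. \<psi> (y + s, t))
      + c * (v * (\<psi> (b + s, t) - \<psi> (a + s, t)) + integral {a..b} (\<lambda>y. \<psi>t (y + s, t)))"
proof -
  have "((\<lambda>y. c' * \<psi> (y + s, t) + c * (v * \<psi>x (y + s, t) + \<psi>t (y + s, t))) has_integral
      c' * integral {a..b} (\<lambda>y. \<psi> (y + s, t))
      + c * (v * integral {a..b} (\<lambda>y. \<psi>x (y + s, t)) + integral {a..b} (\<lambda>y. \<psi>t (y + s, t)))) {a..b}"
    by (intro has_integral_add has_integral_mult_right integrable_integral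
        integrable_continuous_interval continuous_intros)
  then show ?thesis
    using integral_\<psi>x[OF assms] by (simp add: integral_unique)
qed

text \<open>The shift by \<open>\<xi>(t)\<close> turns the moving half-strips into fixed rectangles, where the
  integrals in \<open>y\<close> and \<open>t\<close> can be swapped.\<close>

lemma has_integral_along_strip:
  assumes T: "0 \<le> T" and ab: "a \<le> b"
    and \<xi>: "\<And>t. t \<in> {0..T} \<Longrightarrow> (\<xi> has_real_derivative \<sigma> t) (at t within {0..T})"
    and \<sigma>: "continuous_on {0..T} \<sigma>"
    and c: "\<And>t. t \<in> {0..T} \<Longrightarrow> (c has_real_derivative c' t) (at t within {0..T})"
    and c': "continuous_on {0..T} c'"
  shows "((\<lambda>t. c' t * integral {a..b} (\<lambda>y. \<psi> (y + \<xi> t, t))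
               + c t * (\<sigma> t * (\<psi> (b + \<xi> t, t) - \<psi> (a + \<xi> t, t))
                        + integral {a..b} (\<lambda>y. \<psi>t (y + \<xi> t, t))))
           has_integral c T * integral {a..b} (\<lambda>y. \<psi> (y + \<xi> T, T))
                        - c 0 * integral {a..b} (\<lambda>y. \<psi> (y + \<xi> 0, 0))) {0..T}"
proof -
  have \<xi>_cont: "continuous_on {0..T} \<xi>" and c_cont: "continuous_on {0..T} c"
    using DERIV_continuous_on \<xi> c by blast+
  define D where "D y t = c' t * \<psi> (y + \<xi> t, t) + c t * (\<sigma> t * \<psi>x (y + \<xi> t, t) + \<psi>t (y + \<xi> t, t))"
    for y t
  note coefficients_continuous = continuous_on_compose2[OF \<xi>_cont] continuous_on_compose2[OF \<sigma>]
    continuous_on_compose2[OF c_cont] continuous_on_compose2[OF c']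
  have D_cont: "continuous_on (cbox (a, 0) (b, T)) (\<lambda>(y, t). D y t)"
    unfolding D_def split_beta cbox_Pair_eq
    by (intro continuous_intros coefficients_continuous; auto simp: cbox_interval)
  have "continuous_on ({0..T} \<times> cbox a b) (\<lambda>(t, y). D y t)"
    unfolding D_def split_beta
    by (intro continuous_intros coefficients_continuous; auto)
  then have integrable: "(\<lambda>t. integral {a..b} (\<lambda>y. D y t)) integrable_on {0..T}"
    using integrable_continuous_interval integral_continuous_on_param by (fastforce simp: cbox_interval)
  have D_integral: "integral {0..T} (D y) = c T * \<psi> (y + \<xi> T, T) - c 0 * \<psi> (y + \<xi> 0, 0)" for y
  proof (rule integral_unique)
    have "((\<lambda>t. y + \<xi> t) has_real_derivative \<sigma> t) (at t within {0..T})" if "t \<in> {0..T}" for t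
      using DERIV_add[OF DERIV_const \<xi>[OF that]] by simp
    from has_integral_along_curve[OF T this c]
    show "(D y has_integral c T * \<psi> (y + \<xi> T, T) - c 0 * \<psi> (y + \<xi> 0, 0)) {0..T}"
      by (simp add: D_def[abs_def])
  qed
  have "integral {0..T} (\<lambda>t. integral {a..b} (\<lambda>y. D y t)) = integral {a..b} (\<lambda>y. integral {0..T} (D y))"
    using integral_swap_continuous[OF D_cont]
    by (simp add: cbox_interval)
  also have "\<dots> = c T * integral {a..b} (\<lambda>y. \<psi> (y + \<xi> T, T)) - c 0 * integral {a..b} (\<lambda>y. \<psi> (y + \<xi> 0, 0))"
    unfolding D_integral
    by (subst integral_diff integral_mult_right;
        (intro integrable_continuous_interval continuous_intros)?)+ simp
  finally have "((\<lambda>t. integral {a..b} (\<lambda>y. D y t)) has_integral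
       c T * integral {a..b} (\<lambda>y. \<psi> (y + \<xi> T, T)) - c 0 * integral {a..b} (\<lambda>y. \<psi> (y + \<xi> 0, 0))) {0..T}"
    using integrable_integral[OF integrable] by simp
  moreover have "integral {a..b} (\<lambda>y. D y t) =
      c' t * integral {a..b} (\<lambda>y. \<psi> (y + \<xi> t, t))
      + c t * (\<sigma> t * (\<psi> (b + \<xi> t, t) - \<psi> (a + \<xi> t, t)) + integral {a..b} (\<lambda>y. \<psi>t (y + \<xi> t, t)))"
    for t
    unfolding D_def by (rule integral_along_shift[OF ab])
  ultimately show ?thesis
    by (rule has_integral_eq[rotated])
qed

end

locale compact_C1_test = C1_plane_fun +
  fixes R :: real
  assumes vanishes: "\<And>x t. 0 \<le> t \<Longrightarrow> R < \<bar>x\<bar> \<or> R < t \<Longrightarrow> \<psi> (x, t) = 0"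
begin

lemma \<psi>x_vanishes:
  assumes "0 \<le> t" "R < \<bar>x\<bar> \<or> R < t"
  shows "\<psi>x (x, t) = 0"
proof (rule has_field_derivative_unique[OF has_real_derivative_\<psi>_x])
  let ?d = "if R < \<bar>x\<bar> then \<bar>x\<bar> - R else 1"
  show "((\<lambda>y. \<psi> (y, t)) has_real_derivative 0) (at x within UNIV)"
  proof (rule has_field_derivative_transform_within[OF DERIV_const, of ?d])
    fix y assume "dist y x < ?d"
    then have "R < \<bar>y\<bar> \<or> R < t"
      using assms(2) by (auto simp: dist_real_def split: if_splits)
    then show "0 = \<psi> (y, t)"
      using vanishes assms(1) by metis
  qed (use assms in auto)
qed simp

text \<open>One-sided derivative in \<open>t\<close>: \<open>\<psi>\<close> is only known to vanish for \<open>t \<ge> 0\<close>.\<close>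

lemma \<psi>t_vanishes:
  assumes "0 \<le> t" "R < \<bar>x\<bar> \<or> R < t"
  shows "\<psi>t (x, t) = 0"
proof (rule has_field_derivative_unique)
  show "((\<lambda>s. \<psi> (x, s)) has_real_derivative \<psi>t (x, t)) (at t within {t..t + 1})"
    using has_real_derivative_\<psi>_t by (rule has_field_derivative_at_within)
  show "((\<lambda>s. \<psi> (x, s)) has_real_derivative 0) (at t within {t..t + 1})"
  proof (rule has_field_derivative_transform_within[OF DERIV_const zero_less_one])
    fix s assume "s \<in> {t..t + 1}"
    then show "0 = \<psi> (x, s)"
      using vanishes assms by force
  qed simp
  show "at t within {t..t + 1} \<noteq> bot"
    by (simp add: at_within_Icc_at_right)
qed

end

lemma test_fun_compact_C1_test:
  assumes "test_fun \<psi>"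
  obtains \<psi>x \<psi>t R where "compact_C1_test \<psi> \<psi>x \<psi>t R"
proof -
  from assms obtain R where "Ck (Suc 0) \<psi>"
    and vanishes: "\<And>x t. 0 \<le> t \<Longrightarrow> R < \<bar>x\<bar> \<or> R < t \<Longrightarrow> \<psi> (x, t) = 0"
    unfolding test_fun_def smooth2_def by blast
  then obtain \<psi>x \<psi>t
    where "\<forall>p. (\<psi> has_derivative (\<lambda>h. \<psi>x p * fst h + \<psi>t p * snd h)) (at p)"
      and "continuous_on UNIV \<psi>x" "continuous_on UNIV \<psi>t"
    by auto
  with vanishes show thesis
    by (intro that[of \<psi>x \<psi>t R]) (simp add: compact_C1_test_def compact_C1_test_axioms_def C1_plane_fun_def)
qed

section \<open>The weak form across a shock curve\<close>

text \<open>For \<open>t \<in> [0, T]\<close> the support of \<open>\<psi>(\<cdot>, t)\<close> lies in \<open>[\<xi>(t) - K, \<xi>(t) + K]\<close>, and \<open>\<psi>\<close>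
  vanishes from time \<open>T\<close> on.\<close>

locale shock_strip = compact_C1_test +
  fixes \<xi> \<sigma> :: "real \<Rightarrow> real" and T K :: real
  assumes \<xi>_derivative: "\<And>t. t \<in> {0..T} \<Longrightarrow> (\<xi> has_real_derivative \<sigma> t) (at t within {0..T})"
    and continuous_\<sigma>: "continuous_on {0..T} \<sigma>"
    and \<xi>_0: "\<xi> 0 = 0"
    and T_nonneg: "0 \<le> T" and support_before_T: "R < T"
    and K_pos: "0 < K" and support_in_strip: "\<And>t. t \<in> {0..T} \<Longrightarrow> R + \<bar>\<xi> t\<bar> < K"
begin

lemma continuous_\<xi>: "continuous_on {0..T} \<xi>"
  using DERIV_continuous_on \<xi>_derivative by blast

definition left_integral :: "(real \<times> real \<Rightarrow> real) \<Rightarrow> real \<Rightarrow> real" where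
  "left_integral q t = integral {-K..0} (\<lambda>y. q (y + \<xi> t, t))"

definition right_integral :: "(real \<times> real \<Rightarrow> real) \<Rightarrow> real \<Rightarrow> real" where
  "right_integral q t = integral {0..K} (\<lambda>y. q (y + \<xi> t, t))"

lemma \<psi>_strip_edges:
  assumes "t \<in> {0..T}"
  shows "\<psi> (\<xi> t - K, t) = 0" and "\<psi> (K + \<xi> t, t) = 0"
  using support_in_strip[OF assms] assms by (auto intro!: vanishes)

lemma \<psi>_at_T: "\<psi> (x, T) = 0"
  using T_nonneg support_before_T by (auto intro!: vanishes)

lemma has_integral_dint:
  fixes q :: "real \<times> real \<Rightarrow> real" and A B :: "real \<Rightarrow> real"
  assumes q: "continuous_on UNIV q"
    and q_vanishes: "\<And>x t. 0 \<le> t \<Longrightarrow> R < \<bar>x\<bar> \<or> R < t \<Longrightarrow> q (x, t) = 0"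
    and A: "continuous_on {0..T} A" and B: "continuous_on {0..T} B"
  shows "((\<lambda>t. A t * left_integral q t + B t * right_integral q t)
          has_integral dint (\<lambda>x t. (if x < \<xi> t then A t else B t) * q (x, t))) {0..T}"
  unfolding dint_def left_integral_def right_integral_def
proof (rule has_integral_LBINT_atLeast[OF T_nonneg])
  show "continuous_on {0..T}
    (\<lambda>t. A t * integral {-K..0} (\<lambda>y. q (y + \<xi> t, t)) + B t * integral {0..K} (\<lambda>y. q (y + \<xi> t, t)))"
    by (intro continuous_intros A B continuous_on_integral_shifted[OF q continuous_\<xi>])
  show "(LBINT x. (if x < \<xi> t then A t else B t) * q (x, t))
      = A t * integral {-K..0} (\<lambda>y. q (y + \<xi> t, t)) + B t * integral {0..K} (\<lambda>y. q (y + \<xi> t, t))"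
    if t: "t \<in> {0..T}" for t
  proof (rule lborel_integral_step_mult[OF _ K_pos])
    show "continuous_on UNIV (\<lambda>x. q (x, t))"
      by (intro continuous_on_compose2[OF q] continuous_intros) auto
    show "q (x, t) = 0" if "K < \<bar>x - \<xi> t\<bar>" for x
      using that t support_in_strip[OF t] by (intro q_vanishes) auto
  qed
  show "(LBINT x. (if x < \<xi> t then A t else B t) * q (x, t)) = 0" if "T < t" for t
    using that T_nonneg support_before_T q_vanishes by simp
qed

lemma has_integral_tint:
  fixes q :: "real \<times> real \<Rightarrow> real" and c :: "real \<Rightarrow> real"
  assumes q: "continuous_on UNIV q"
    and q_vanishes: "\<And>x t. 0 \<le> t \<Longrightarrow> R < \<bar>x\<bar> \<or> R < t \<Longrightarrow> q (x, t) = 0"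
    and c: "continuous_on {0..T} c"
  shows "((\<lambda>t. c t * q (\<xi> t, t)) has_integral tint (\<lambda>t. c t * q (\<xi> t, t))) {0..T}"
  unfolding tint_def
proof (rule has_integral_LBINT_atLeast[OF T_nonneg])
  show "continuous_on {0..T} (\<lambda>t. c t * q (\<xi> t, t))"
    by (intro continuous_intros c continuous_on_compose2[OF q] continuous_\<xi>) auto
qed (use T_nonneg support_before_T q_vanishes in auto)

lemma initial_integral:
  "(LBINT x. (if x < 0 then A else B) * \<psi> (x, 0)) = A * left_integral \<psi> 0 + B * right_integral \<psi> 0"
proof -
  have "(LBINT x. (if x < 0 then A else B) * \<psi> (x, 0))
      = A * integral {-K..0} (\<lambda>y. \<psi> (y + 0, 0)) + B * integral {0..K} (\<lambda>y. \<psi> (y + 0, 0))"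
  proof (rule lborel_integral_step_mult[OF _ K_pos])
    show "continuous_on UNIV (\<lambda>x. \<psi> (x, 0))"
      by (intro continuous_intros)
    show "\<psi> (x, 0) = 0" if "K < \<bar>x - 0\<bar>" for x
      using that support_in_strip[of 0] T_nonneg by (intro vanishes) auto
  qed
  then show ?thesis
    by (simp add: left_integral_def right_integral_def \<xi>_0)
qed

lemma has_integral_weak_form_terms:
  fixes a b a' b' f g m w :: "real \<Rightarrow> real"
  assumes a: "continuous_on {0..T} a" and b: "continuous_on {0..T} b"
    and a': "continuous_on {0..T} a'" and b': "continuous_on {0..T} b'"
    and f: "continuous_on {0..T} f" and g: "continuous_on {0..T} g"
    and m: "continuous_on {0..T} m" and w: "continuous_on {0..T} w"
  shows "((\<lambda>t. a t * left_integral \<psi>t t + b t * right_integral \<psi>t t + w t * \<psi>t (\<xi> t, t)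
            + (f t * left_integral \<psi>x t + g t * right_integral \<psi>x t) + w t * \<sigma> t * \<psi>x (\<xi> t, t)
            + (a' t * left_integral \<psi> t + b' t * right_integral \<psi> t) + m t * \<psi> (\<xi> t, t))
    has_integral
      dint (\<lambda>x t. (if x < \<xi> t then a t else b t) * pt \<psi> x t) + tint (\<lambda>t. w t * pt \<psi> (\<xi> t) t)
       + dint (\<lambda>x t. (if x < \<xi> t then f t else g t) * px \<psi> x t) + tint (\<lambda>t. w t * \<sigma> t * px \<psi> (\<xi> t) t)
       + dint (\<lambda>x t. (if x < \<xi> t then a' t else b' t) * \<psi> (x, t)) + tint (\<lambda>t. m t * \<psi> (\<xi> t, t)))
    {0..T}"
proof -
  have "continuous_on {0..T} (\<lambda>t. w t * \<sigma> t)"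
    by (intro continuous_intros w continuous_\<sigma>)
  with continuous_\<psi>x \<psi>x_vanishes
  have "((\<lambda>t. w t * \<sigma> t * \<psi>x (\<xi> t, t)) has_integral
         tint (\<lambda>t. w t * \<sigma> t * px \<psi> (\<xi> t) t)) {0..T}"
    unfolding px_eq by (rule has_integral_tint)
  moreover have "((\<lambda>t. a t * left_integral \<psi>t t + b t * right_integral \<psi>t t) has_integral
         dint (\<lambda>x t. (if x < \<xi> t then a t else b t) * pt \<psi> x t)) {0..T}"
    unfolding pt_eq using continuous_\<psi>t \<psi>t_vanishes a b by (rule has_integral_dint)
  moreover have "((\<lambda>t. w t * \<psi>t (\<xi> t, t)) has_integral tint (\<lambda>t. w t * pt \<psi> (\<xi> t) t)) {0..T}"
    unfolding pt_eq using continuous_\<psi>t \<psi>t_vanishes w by (rule has_integral_tint)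
  moreover have "((\<lambda>t. f t * left_integral \<psi>x t + g t * right_integral \<psi>x t) has_integral
         dint (\<lambda>x t. (if x < \<xi> t then f t else g t) * px \<psi> x t)) {0..T}"
    unfolding px_eq using continuous_\<psi>x \<psi>x_vanishes f g by (rule has_integral_dint)
  moreover have "((\<lambda>t. a' t * left_integral \<psi> t + b' t * right_integral \<psi> t) has_integral
         dint (\<lambda>x t. (if x < \<xi> t then a' t else b' t) * \<psi> (x, t))) {0..T}"
    using continuous_\<psi> vanishes a' b' by (rule has_integral_dint)
  moreover have "((\<lambda>t. m t * \<psi> (\<xi> t, t)) has_integral tint (\<lambda>t. m t * \<psi> (\<xi> t, t))) {0..T}"
    using continuous_\<psi> vanishes m by (rule has_integral_tint)
  ultimately show ?thesis
    by (intro has_integral_add)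
qed

lemma weak_form_identity:
  fixes a b a' b' f g m w :: "real \<Rightarrow> real"
  assumes a: "\<And>t. t \<in> {0..T} \<Longrightarrow> (a has_real_derivative a' t) (at t within {0..T})"
    and b: "\<And>t. t \<in> {0..T} \<Longrightarrow> (b has_real_derivative b' t) (at t within {0..T})"
    and a': "continuous_on {0..T} a'" and b': "continuous_on {0..T} b'"
    and f: "continuous_on {0..T} f" and g: "continuous_on {0..T} g"
    and m: "continuous_on {0..T} m"
    and w: "\<And>t. t \<in> {0..T} \<Longrightarrow>
      (w has_real_derivative (b t - a t) * \<sigma> t - (g t - f t) + m t) (at t within {0..T})"
    and w_0: "w 0 = 0"
  shows "dint (\<lambda>x t. (if x < \<xi> t then a t else b t) * pt \<psi> x t) + tint (\<lambda>t. w t * pt \<psi> (\<xi> t) t)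
       + dint (\<lambda>x t. (if x < \<xi> t then f t else g t) * px \<psi> x t) + tint (\<lambda>t. w t * \<sigma> t * px \<psi> (\<xi> t) t)
       + dint (\<lambda>x t. (if x < \<xi> t then a' t else b' t) * \<psi> (x, t)) + tint (\<lambda>t. m t * \<psi> (\<xi> t, t))
     = - (LBINT x. (if x < 0 then a 0 else b 0) * \<psi> (x, 0))"
    (is "?lhs = _")
proof -
  have "continuous_on {0..T} a" "continuous_on {0..T} b" "continuous_on {0..T} w"
    using DERIV_continuous_on[OF a] DERIV_continuous_on[OF b] DERIV_continuous_on[OF w] by simp_all
  note lhs = has_integral_weak_form_terms[OF this(1,2) a' b' f g m this(3)]
  have rhs: "((\<lambda>t. a' t * left_integral \<psi> t
        + a t * (\<sigma> t * (\<psi> (0 + \<xi> t, t) - \<psi> (- K + \<xi> t, t)) + left_integral \<psi>t t)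
      + (b' t * right_integral \<psi> t
        + b t * (\<sigma> t * (\<psi> (K + \<xi> t, t) - \<psi> (0 + \<xi> t, t)) + right_integral \<psi>t t))
      + (((b t - a t) * \<sigma> t - (g t - f t) + m t) * \<psi> (\<xi> t, t)
         + w t * (\<sigma> t * \<psi>x (\<xi> t, t) + \<psi>t (\<xi> t, t))))
    has_integral (a T * left_integral \<psi> T - a 0 * left_integral \<psi> 0)
      + (b T * right_integral \<psi> T - b 0 * right_integral \<psi> 0)
      + (w T * \<psi> (\<xi> T, T) - w 0 * \<psi> (\<xi> 0, 0))) {0..T}"
    unfolding left_integral_def right_integral_def using K_pos
    by (intro has_integral_add has_integral_along_strip has_integral_along_curve
        T_nonneg \<xi>_derivative continuous_\<sigma> a a' b b' w) auto
  have \<psi>x_integrals: "left_integral \<psi>x t = \<psi> (\<xi> t, t)" "right_integral \<psi>x t = - \<psi> (\<xi> t, t)"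
    if "t \<in> {0..T}" for t
    using integral_\<psi>x[of "- K" 0] integral_\<psi>x[of 0 K] \<psi>_strip_edges[OF that] K_pos
    by (simp_all add: left_integral_def right_integral_def)
  have "?lhs = (a T * left_integral \<psi> T - a 0 * left_integral \<psi> 0)
      + (b T * right_integral \<psi> T - b 0 * right_integral \<psi> 0)
      + (w T * \<psi> (\<xi> T, T) - w 0 * \<psi> (\<xi> 0, 0))"
    by (rule has_integral_unique[OF lhs has_integral_eq[OF _ rhs]])
      (simp add: \<psi>x_integrals \<psi>_strip_edges algebra_simps)
  then show ?thesis
    by (simp add: initial_integral left_integral_def right_integral_def \<xi>_0 w_0 \<psi>_at_T)
qed

end

lemma has_real_derivative_LBINT_upper:
  fixes \<sigma> :: "real \<Rightarrow> real"
  assumes \<sigma>: "continuous_on {0..} \<sigma>" and t: "0 \<le> t"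
  shows "((\<lambda>t. LBINT s:{0..t}. \<sigma> s) has_real_derivative \<sigma> t) (at t within {0..})"
proof -
  have "at t within {0..} = at t within {0..t + 1}"
    by (rule at_within_nhd[where S="{t - 1<..<t + 1}"]) auto
  moreover have "((\<lambda>u. integral {0..u} \<sigma>) has_real_derivative \<sigma> t) (at t within {0..t + 1})"
    by (rule integral_has_real_derivative) (use continuous_on_subset[OF \<sigma>] t in auto)
  then have "((\<lambda>u. LBINT s:{0..u}. \<sigma> s) has_real_derivative \<sigma> t) (at t within {0..t + 1})"
  proof (rule has_field_derivative_transform_within[OF _ zero_less_one])
    fix u assume "u \<in> {0..t + 1}"
    then show "integral {0..u} \<sigma> = (LBINT s:{0..u}. \<sigma> s)"
      using borel_integrable_atLeastAtMost'[OF continuous_on_subset[OF \<sigma>]]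
      by (subst set_borel_integral_eq_integral(2)) auto
  qed (use t in auto)
  ultimately show ?thesis
    by simp
qed

text \<open>A general balance law \<open>\<partial>\<^sub>t \<rho> + \<partial>\<^sub>x q = s + m \<delta>(x - \<xi>(t))\<close>, with \<open>\<rho>, q, s\<close> equal to
  \<open>a, f, a'\<close> left of the curve and \<open>b, g, b'\<close> right of it, and a \<open>\<delta>\<close> of weight \<open>w\<close> in \<open>\<rho>\<close>
  (hence \<open>w \<sigma>\<close> in \<open>q\<close>) moving with the curve.\<close>

theorem delta_shock_weak_form:
  fixes \<psi> :: "real \<times> real \<Rightarrow> real" and \<xi> \<sigma> a b a' b' f g m w :: "real \<Rightarrow> real"
    and \<rho> q s :: "real \<Rightarrow> real \<Rightarrow> real" and \<rho>\<^sub>0 :: "real \<Rightarrow> real"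
  assumes \<psi>: "test_fun \<psi>"
    and \<xi>: "\<And>t. 0 \<le> t \<Longrightarrow> (\<xi> has_real_derivative \<sigma> t) (at t within {0..})" and \<xi>_0: "\<xi> 0 = 0"
    and \<sigma>: "continuous_on {0..} \<sigma>"
    and a: "\<And>t. 0 \<le> t \<Longrightarrow> (a has_real_derivative a' t) (at t within {0..})"
    and b: "\<And>t. 0 \<le> t \<Longrightarrow> (b has_real_derivative b' t) (at t within {0..})"
    and a': "continuous_on {0..} a'" and b': "continuous_on {0..} b'"
    and f: "continuous_on {0..} f" and g: "continuous_on {0..} g"
    and m: "continuous_on {0..} m"
    and w: "\<And>t. 0 \<le> t \<Longrightarrow>
      (w has_real_derivative (b t - a t) * \<sigma> t - (g t - f t) + m t) (at t within {0..})"
    and w_0: "w 0 = 0"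
    and \<rho>: "\<And>x t. \<rho> x t = (if x < \<xi> t then a t else b t)"
    and q: "\<And>x t. q x t = (if x < \<xi> t then f t else g t)"
    and s: "\<And>x t. s x t = (if x < \<xi> t then a' t else b' t)"
    and \<rho>\<^sub>0: "\<And>x. \<rho>\<^sub>0 x = (if x < 0 then a 0 else b 0)"
  shows "dint (\<lambda>x t. \<rho> x t * pt \<psi> x t) + tint (\<lambda>t. w t * pt \<psi> (\<xi> t) t)
       + dint (\<lambda>x t. q x t * px \<psi> x t) + tint (\<lambda>t. w t * \<sigma> t * px \<psi> (\<xi> t) t)
       + dint (\<lambda>x t. s x t * \<psi> (x, t)) + tint (\<lambda>t. m t * \<psi> (\<xi> t, t))
     = - (LBINT x. \<rho>\<^sub>0 x * \<psi> (x, 0))"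
proof -
  obtain \<psi>x \<psi>t R where "compact_C1_test \<psi> \<psi>x \<psi>t R"
    using test_fun_compact_C1_test[OF \<psi>] .
  then interpret compact_C1_test \<psi> \<psi>x \<psi>t R .
  define T where "T = \<bar>R\<bar> + 1"
  have restrict: "(F has_real_derivative F' t) (at t within {0..T})"
    if "\<And>t. 0 \<le> t \<Longrightarrow> (F has_real_derivative F' t) (at t within {0..})" "t \<in> {0..T}"
    for F F' :: "real \<Rightarrow> real" and t
    by (rule DERIV_subset[OF that(1)]) (use that(2) in auto)
  have "bounded (\<xi> ` {0..T})"
    using restrict[OF \<xi>] by (intro compact_imp_bounded compact_continuous_image DERIV_continuous_on) auto
  then obtain M where M: "\<And>t. t \<in> {0..T} \<Longrightarrow> \<bar>\<xi> t\<bar> \<le> M"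
    unfolding bounded_real by blast
  have "0 \<le> M"
    using M[of 0] T_def by simp
  then interpret shock_strip \<psi> \<psi>x \<psi>t R \<xi> \<sigma> T "\<bar>R\<bar> + M + 1"
  proof unfold_locales
    show "(\<xi> has_real_derivative \<sigma> t) (at t within {0..T})" if "t \<in> {0..T}" for t
      using restrict[OF \<xi> that] .
    show "continuous_on {0..T} \<sigma>"
      by (rule continuous_on_subset[OF \<sigma>]) auto
    show "R + \<bar>\<xi> t\<bar> < \<bar>R\<bar> + M + 1" if "t \<in> {0..T}" for t
      using M[OF that] by simp
  qed (use \<xi>_0 in \<open>auto simp: T_def\<close>)
  show ?thesis
    unfolding \<rho> q s \<rho>\<^sub>0
    by (rule weak_form_identity)
      (use restrict[OF a] restrict[OF b] restrict[OF w] w_0 in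
        \<open>auto intro: continuous_on_subset[OF a'] continuous_on_subset[OF b'] continuous_on_subset[OF f]
          continuous_on_subset[OF g] continuous_on_subset[OF m]\<close>)
qed

section \<open>The Eulerian droplet model\<close>

lemma relaxation_has_derivative:
  "((\<lambda>t. ua + (u0 - ua) * exp (- \<mu> * t)) has_real_derivative
      \<mu> * (ua - (ua + (u0 - ua) * exp (- \<mu> * t)))) (at t within S)"
  by (auto intro!: derivative_eq_intros simp: algebra_simps)

lemma droplet_mass_weak_form:
  fixes \<psi> :: "real \<times> real \<Rightarrow> real" and \<xi> \<sigma> \<omega> ul ur :: "real \<Rightarrow> real" and am ap :: real
  assumes "test_fun \<psi>"
    and "\<And>t. 0 \<le> t \<Longrightarrow> (\<xi> has_real_derivative \<sigma> t) (at t within {0..})" and "\<xi> 0 = 0"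
    and "continuous_on {0..} \<sigma>" and "continuous_on {0..} ul" and "continuous_on {0..} ur"
    and "\<And>t. 0 \<le> t \<Longrightarrow>
      (\<omega> has_real_derivative (ap - am) * \<sigma> t - (ap * ur t - am * ul t)) (at t within {0..})"
    and "\<omega> 0 = 0"
  shows "(dint (\<lambda>x t. (if x < \<xi> t then am else ap) * pt \<psi> x t) + tint (\<lambda>t. \<omega> t * pt \<psi> (\<xi> t) t))
       + (dint (\<lambda>x t. (if x < \<xi> t then am else ap) * (if x < \<xi> t then ul t else ur t) * px \<psi> x t)
          + tint (\<lambda>t. \<omega> t * \<sigma> t * px \<psi> (\<xi> t) t))
     = - (LBINT x. (if x < 0 then am else ap) * \<psi> (x, 0))"
proof -
  have "dint (\<lambda>x t. (if x < \<xi> t then am else ap) * pt \<psi> x t) + tint (\<lambda>t. \<omega> t * pt \<psi> (\<xi> t) t)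
      + dint (\<lambda>x t. (if x < \<xi> t then am else ap) * (if x < \<xi> t then ul t else ur t) * px \<psi> x t)
      + tint (\<lambda>t. \<omega> t * \<sigma> t * px \<psi> (\<xi> t) t)
      + dint (\<lambda>x t. 0 * \<psi> (x, t)) + tint (\<lambda>t. 0 * \<psi> (\<xi> t, t))
      = - (LBINT x. (if x < 0 then am else ap) * \<psi> (x, 0))"
    by (rule delta_shock_weak_form[where a="\<lambda>_. am" and b="\<lambda>_. ap" and a'="\<lambda>_. 0" and b'="\<lambda>_. 0"
          and f="\<lambda>t. am * ul t" and g="\<lambda>t. ap * ur t"])
      (use assms in \<open>auto intro!: continuous_on_mult continuous_on_const DERIV_const\<close>)
  then show ?thesis
    by (simp add: dint_def tint_def add.assoc)
qed

lemma droplet_momentum_weak_form: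
  fixes \<psi> :: "real \<times> real \<Rightarrow> real" and \<xi> \<sigma> \<omega> ul ur :: "real \<Rightarrow> real" and \<mu> ua am ap um up :: real
  assumes "test_fun \<psi>"
    and "\<And>t. 0 \<le> t \<Longrightarrow> (\<xi> has_real_derivative \<sigma> t) (at t within {0..})" and "\<xi> 0 = 0"
    and "continuous_on {0..} \<sigma>" and "continuous_on {0..} \<omega>"
    and ul: "\<And>t. (ul has_real_derivative \<mu> * (ua - ul t)) (at t within {0..})" and "ul 0 = um"
    and ur: "\<And>t. (ur has_real_derivative \<mu> * (ua - ur t)) (at t within {0..})" and "ur 0 = up"
    and "\<And>t. 0 \<le> t \<Longrightarrow> ((\<lambda>s. \<omega> s * \<sigma> s) has_real_derivative
      (ap * ur t - am * ul t) * \<sigma> t - (ap * (ur t)\<^sup>2 - am * (ul t)\<^sup>2) + \<mu> * (ua - \<sigma> t) * \<omega> t)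
      (at t within {0..})"
    and "\<omega> 0 = 0"
  shows "(dint (\<lambda>x t. (if x < \<xi> t then am else ap) * (if x < \<xi> t then ul t else ur t) * pt \<psi> x t)
          + tint (\<lambda>t. \<omega> t * \<sigma> t * pt \<psi> (\<xi> t) t))
       + (dint (\<lambda>x t. (if x < \<xi> t then am else ap) * (if x < \<xi> t then ul t else ur t)\<^sup>2 * px \<psi> x t)
          + tint (\<lambda>t. \<sigma> t * \<omega> t * \<sigma> t * px \<psi> (\<xi> t) t))
       + \<mu> * (dint (\<lambda>x t. (if x < \<xi> t then am else ap) * (ua - (if x < \<xi> t then ul t else ur t)) * \<psi> (x, t))
              + tint (\<lambda>t. (ua - \<sigma> t) * \<omega> t * \<psi> (\<xi> t, t)))
     = - (LBINT x. (if x < 0 then am else ap) * (if x < 0 then um else up) * \<psi> (x, 0))"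
proof -
  have ul_cont: "continuous_on {0..} ul" and ur_cont: "continuous_on {0..} ur"
    by (rule DERIV_continuous_on[OF ul], rule DERIV_continuous_on[OF ur])
  have "dint (\<lambda>x t. (if x < \<xi> t then am else ap) * (if x < \<xi> t then ul t else ur t) * pt \<psi> x t)
      + tint (\<lambda>t. \<omega> t * \<sigma> t * pt \<psi> (\<xi> t) t)
      + dint (\<lambda>x t. (if x < \<xi> t then am else ap) * (if x < \<xi> t then ul t else ur t)\<^sup>2 * px \<psi> x t)
      + tint (\<lambda>t. \<omega> t * \<sigma> t * \<sigma> t * px \<psi> (\<xi> t) t)
      + dint (\<lambda>x t. \<mu> * ((if x < \<xi> t then am else ap) * (ua - (if x < \<xi> t then ul t else ur t))) * \<psi> (x, t))
      + tint (\<lambda>t. \<mu> * (ua - \<sigma> t) * \<omega> t * \<psi> (\<xi> t, t))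
      = - (LBINT x. (if x < 0 then am else ap) * (if x < 0 then um else up) * \<psi> (x, 0))"
    by (rule delta_shock_weak_form[where a="\<lambda>t. am * ul t" and b="\<lambda>t. ap * ur t"
          and a'="\<lambda>t. am * (\<mu> * (ua - ul t))" and b'="\<lambda>t. ap * (\<mu> * (ua - ur t))"
          and f="\<lambda>t. am * (ul t)\<^sup>2" and g="\<lambda>t. ap * (ur t)\<^sup>2"])
      (use assms ul_cont ur_cont in
        \<open>auto intro!: DERIV_cmult ul ur continuous_on_mult continuous_on_const continuous_on_diff
          continuous_on_power\<close>)
  moreover have "tint (\<lambda>t. \<sigma> t * \<omega> t * \<sigma> t * px \<psi> (\<xi> t) t) = tint (\<lambda>t. \<omega> t * \<sigma> t * \<sigma> t * px \<psi> (\<xi> t) t)"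
    by (simp add: mult_ac)
  moreover have "\<mu> * (dint (\<lambda>x t. (if x < \<xi> t then am else ap) * (ua - (if x < \<xi> t then ul t else ur t)) * \<psi> (x, t))
              + tint (\<lambda>t. (ua - \<sigma> t) * \<omega> t * \<psi> (\<xi> t, t)))
      = dint (\<lambda>x t. \<mu> * ((if x < \<xi> t then am else ap) * (ua - (if x < \<xi> t then ul t else ur t))) * \<psi> (x, t))
      + tint (\<lambda>t. \<mu> * (ua - \<sigma> t) * \<omega> t * \<psi> (\<xi> t, t))"
    by (simp add: dint_cmult tint_cmult distrib_left mult.assoc)
  ultimately show ?thesis
    by linarith
qed

theorem mainTheorem10:
  fixes \<mu> ua am ap um up :: real
    and \<omega> \<sigma> :: "real \<Rightarrow> real"
  assumes mu_pos: "\<mu> > 0"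
    and am_pos: "am > 0" and ap_pos: "ap > 0"
    and u_order: "um > up"
    and omega_C1: "C1_halfline \<omega>" and sigma_C1: "C1_halfline \<sigma>"
    and RH1: "\<And>t. t \<ge> 0 \<Longrightarrow>
      (\<omega> has_real_derivative
         ((ap - am) * \<sigma> t
          - (ap * (ua + (up - ua) * exp (-\<mu> * t)) - am * (ua + (um - ua) * exp (-\<mu> * t)))))
      (at t within {0..})"
    and RH2: "\<And>t. t \<ge> 0 \<Longrightarrow>
      ((\<lambda>s. \<omega> s * \<sigma> s) has_real_derivative
         ((ap * (ua + (up - ua) * exp (-\<mu> * t)) - am * (ua + (um - ua) * exp (-\<mu> * t))) * \<sigma> t
          - (ap * (ua + (up - ua) * exp (-\<mu> * t))\<^sup>2 - am * (ua + (um - ua) * exp (-\<mu> * t))\<^sup>2)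
          + \<mu> * (ua - \<sigma> t) * \<omega> t))
      (at t within {0..})"
    and omega0: "\<omega> 0 = 0"
    and between: "\<And>t. t \<ge> 0 \<Longrightarrow>
      ua + (up - ua) * exp (-\<mu> * t) < \<sigma> t \<and> \<sigma> t < ua + (um - ua) * exp (-\<mu> * t)"
  shows
    "(let ul = (\<lambda>t. ua + (um - ua) * exp (-\<mu> * t));
          ur = (\<lambda>t. ua + (up - ua) * exp (-\<mu> * t));
          \<xi> = (\<lambda>t. LBINT s:{0..t}. \<sigma> s);
          \<alpha>0 = (\<lambda>x t. if x < \<xi> t then am else ap);
          u0 = (\<lambda>x t. if x < \<xi> t then ul t else ur t);
          \<alpha>init = (\<lambda>x. if x < 0 then am else ap);
          uinit = (\<lambda>x. if x < 0 then um else up)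
      in
        (\<forall>\<psi>. test_fun \<psi> \<longrightarrow>
           (dint (\<lambda>x t. \<alpha>0 x t * pt \<psi> x t) + tint (\<lambda>t. \<omega> t * pt \<psi> (\<xi> t) t))
           + (dint (\<lambda>x t. \<alpha>0 x t * u0 x t * px \<psi> x t)
              + tint (\<lambda>t. \<omega> t * \<sigma> t * px \<psi> (\<xi> t) t))
           = - (LBINT x. \<alpha>init x * \<psi> (x, 0)))
      \<and> (\<forall>\<psi>. test_fun \<psi> \<longrightarrow>
           (dint (\<lambda>x t. \<alpha>0 x t * u0 x t * pt \<psi> x t)
              + tint (\<lambda>t. \<omega> t * \<sigma> t * pt \<psi> (\<xi> t) t))
           + (dint (\<lambda>x t. \<alpha>0 x t * (u0 x t)\<^sup>2 * px \<psi> x t)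
              + tint (\<lambda>t. \<sigma> t * \<omega> t * \<sigma> t * px \<psi> (\<xi> t) t))
           + \<mu> * (dint (\<lambda>x t. \<alpha>0 x t * (ua - u0 x t) * \<psi> (x, t))
                  + tint (\<lambda>t. (ua - \<sigma> t) * \<omega> t * \<psi> (\<xi> t, t)))
           = - (LBINT x. \<alpha>init x * uinit x * \<psi> (x, 0)))
      \<and> (\<forall>t\<ge>0. ur t < \<sigma> t \<and> \<sigma> t < ul t))"
proof -
  define ul where "ul t = ua + (um - ua) * exp (- \<mu> * t)" for t
  define ur where "ur t = ua + (up - ua) * exp (- \<mu> * t)" for t
  define \<xi> where "\<xi> t = (LBINT s:{0..t}. \<sigma> s)" for t
  have \<sigma>: "continuous_on {0..} \<sigma>"
    using sigma_C1 DERIV_continuous_on unfolding C1_halfline_def by (metis atLeast_iff)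
  have \<xi>: "(\<xi> has_real_derivative \<sigma> t) (at t within {0..})" if "0 \<le> t" for t
    unfolding \<xi>_def[abs_def] using \<sigma> that by (rule has_real_derivative_LBINT_upper)
  have "(LBINT s:{0..0}. \<sigma> s) = integral {0..0} \<sigma>"
    by (rule set_borel_integral_eq_integral(2)[OF borel_integrable_atLeastAtMost'])
      (rule continuous_on_subset[OF \<sigma>], auto)
  then have \<xi>_0: "\<xi> 0 = 0"
    by (simp add: \<xi>_def)
  have ul: "(ul has_real_derivative \<mu> * (ua - ul t)) (at t within {0..})"
    and ur: "(ur has_real_derivative \<mu> * (ua - ur t)) (at t within {0..})" for t
    unfolding ul_def[abs_def] ur_def[abs_def] by (rule relaxation_has_derivative)+
  have ul_cont: "continuous_on {0..} ul" and ur_cont: "continuous_on {0..} ur"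
    unfolding ul_def[abs_def] ur_def[abs_def] by (intro continuous_intros)+
  have \<omega>_cont: "continuous_on {0..} \<omega>"
    by (rule DERIV_continuous_on, rule RH1) simp
  have ul_0: "ul 0 = um" and ur_0: "ur 0 = up"
    by (simp_all add: ul_def ur_def)
  show ?thesis
    unfolding Let_def ul_def[symmetric] ur_def[symmetric] \<xi>_def[symmetric]
    using droplet_mass_weak_form[OF _ \<xi> \<xi>_0 \<sigma> ul_cont ur_cont RH1[folded ul_def ur_def] omega0]
      droplet_momentum_weak_form[OF _ \<xi> \<xi>_0 \<sigma> \<omega>_cont ul ul_0 ur ur_0 RH2[folded ul_def ur_def] omega0]
      between[folded ul_def ur_def]
    by blast
qed

end
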